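(* Let $\mathcal H$ be a graded connected Hopf algebra over a field $\Bbbk$ of characteristic different from $2$. Let $\varphi,\psi\colon\mathcal H\to\Bbbk$ be linear functionals with $\varphi_0=\psi_0=\epsilon$. Then: (a) There is a unique linear functional $\rho\colon\mathcal H\to\Bbbk$ such that $\varphi=\rho\psi\rho$ and $\rho_0=\epsilon$. (b) If $\varphi$ and $\psi$ are characters, then so is $\rho$. (c) If $\bar\varphi=\psi^{-1}$ then $\rho$ is even, and if $\bar\varphi=\psi$ then $\rho$ is odd.
   Context: $\mathcal H=\bigoplus_{n\ge0}\mathcal H_n$ is graded connected ($\mathcal H_0=\Bbbk\cdot1$, structure maps graded) with each $\mathcal H_n$ finite-dimensional. For a linear functional $\varphi$, $\varphi_n$ denotes its restriction to $\mathcal H_n$, and $\epsilon$ (the counit) is viewed as $\epsilon_0$. Products of linear functionals are convolution products $\varphi\psi=m_\Bbbk\circ(\varphi\otimes\psi)\circ\Delta$. A character is an algebra morphism $\mathcal H\to\Bbbk$; characters form a group under convolution with inverse $\varphi^{-1}=\varphi\circ S$. For a linear functional $\varphi$, $\bar\varphi(h)=(-1)^n\varphi(h)$ for $h\in\mathcal H_n$. A character $\rho$ is even if $\bar\rho=\rho$ and odd if $\bar\rho=\rho^{-1}$. *)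

theory Defs
  imports Complex_Main
begin

text \<open>
The carrier is a type 'h of class ring_1 (the algebra multiplication and unit),
with a scalar multiplication smult making it a 'k-vector space and a 'k-algebra.  Elements of the algebraic tensor
product H (x) H are represented by finite lists of pairs (a,b), standing for
the sum of the a (x) b; two such representations are equal in H (x) H iff all
pairs of linear functionals f, g give the same value of the sum of f a * g b
(this is the injectivity of H (x) H into (H* (x) H*)* over a field).
\<close>

definition lin_fun :: "('k::field \<Rightarrow> 'h::ab_group_add \<Rightarrow> 'h) \<Rightarrow> ('h \<Rightarrow> 'k) \<Rightarrow> bool" where
  "lin_fun smult f \<longleftrightarrow> Vector_Spaces.linear smult ((*) :: 'k \<Rightarrow> 'k \<Rightarrow> 'k) f"

definition pairsum :: "('h \<Rightarrow> 'k::comm_ring_1) \<Rightarrow> ('h \<Rightarrow> 'k) \<Rightarrow> ('h \<times> 'h) list \<Rightarrow> 'k" where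
  "pairsum f g xs = sum_list (map (\<lambda>(a, b). f a * g b) xs)"

text \<open>Convolution product of linear functionals: m_k o (f (x) g) o Delta\<close>
definition conv :: "('h \<Rightarrow> ('h \<times> 'h) list) \<Rightarrow> ('h \<Rightarrow> 'k::comm_ring_1) \<Rightarrow> ('h \<Rightarrow> 'k) \<Rightarrow> 'h \<Rightarrow> 'k" where
  "conv cop f g h = pairsum f g (cop h)"

definition graded_connected_hopf_algebra ::
  "('k::field \<Rightarrow> 'h::ring_1 \<Rightarrow> 'h) \<Rightarrow> (nat \<Rightarrow> 'h set) \<Rightarrow> ('h \<Rightarrow> ('h \<times> 'h) list)
    \<Rightarrow> ('h \<Rightarrow> 'k) \<Rightarrow> ('h \<Rightarrow> 'h) \<Rightarrow> bool" where
  "graded_connected_hopf_algebra smult H cop eps S \<longleftrightarrow>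
     \<comment> \<open>'k-algebra\<close>
     vector_space smult \<and>
     (\<forall>c x y. smult c (x * y) = smult c x * y \<and> smult c (x * y) = x * smult c y) \<and>
     \<comment> \<open>grading: H = direct sum of finite-dimensional subspaces H n\<close>
     (\<forall>n. module.subspace smult (H n)) \<and>
     (\<forall>n. \<exists>B. finite B \<and> H n = module.span smult B) \<and>
     (\<forall>x. \<exists>N. x \<in> module.span smult (\<Union>n\<le>N. H n)) \<and>
     (\<forall>N (x :: nat \<Rightarrow> 'h). (\<forall>n\<le>N. x n \<in> H n) \<and> (\<Sum>n\<le>N. x n) = 0 \<longrightarrow> (\<forall>n\<le>N. x n = 0)) \<and>
     \<comment> \<open>connected\<close>
     H 0 = range (\<lambda>c. smult c 1) \<and>
     \<comment> \<open>graded multiplication\<close>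
     (\<forall>m n x y. x \<in> H m \<and> y \<in> H n \<longrightarrow> x * y \<in> H (m + n)) \<and>
     \<comment> \<open>coproduct: linear\<close>
     (\<forall>f g x y. lin_fun smult f \<and> lin_fun smult g \<longrightarrow>
        pairsum f g (cop (x + y)) = pairsum f g (cop x) + pairsum f g (cop y)) \<and>
     (\<forall>f g c x. lin_fun smult f \<and> lin_fun smult g \<longrightarrow>
        pairsum f g (cop (smult c x)) = c * pairsum f g (cop x)) \<and>
     \<comment> \<open>coproduct: graded, Delta(H n) inside sum over i+j=n of H i (x) H j\<close>
     (\<forall>n x. x \<in> H n \<longrightarrow> (\<forall>(a, b) \<in> set (cop x). \<exists>i\<le>n. a \<in> H i \<and> b \<in> H (n - i))) \<and>
     \<comment> \<open>coassociativity: (f (x) g (x) k)((Delta (x) id) Delta x) = (f (x) g (x) k)((id (x) Delta) Delta x)\<close>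
     (\<forall>f g k x. lin_fun smult f \<and> lin_fun smult g \<and> lin_fun smult k \<longrightarrow>
        conv cop (conv cop f g) k x = conv cop f (conv cop g k) x) \<and>
     \<comment> \<open>counit\<close>
     lin_fun smult eps \<and>
     (\<forall>n>0. \<forall>x\<in>H n. eps x = 0) \<and>
     (\<forall>x. sum_list (map (\<lambda>(a, b). smult (eps a) b) (cop x)) = x) \<and>
     (\<forall>x. sum_list (map (\<lambda>(a, b). smult (eps b) a) (cop x)) = x) \<and>
     \<comment> \<open>bialgebra: Delta and eps are unital algebra morphisms\<close>
     (\<forall>f g. lin_fun smult f \<and> lin_fun smult g \<longrightarrow> pairsum f g (cop 1) = f 1 * g 1) \<and>
     (\<forall>f g x y. lin_fun smult f \<and> lin_fun smult g \<longrightarrow>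
        pairsum f g (cop (x * y)) =
        sum_list (map (\<lambda>(a, b). sum_list (map (\<lambda>(c, d). f (a * c) * g (b * d)) (cop y))) (cop x))) \<and>
     eps 1 = 1 \<and> (\<forall>x y. eps (x * y) = eps x * eps y) \<and>
     \<comment> \<open>antipode: linear, graded, m(S (x) id)Delta = eta eps = m(id (x) S)Delta\<close>
     Vector_Spaces.linear smult smult S \<and>
     (\<forall>n. \<forall>x\<in>H n. S x \<in> H n) \<and>
     (\<forall>x. sum_list (map (\<lambda>(a, b). S a * b) (cop x)) = smult (eps x) 1) \<and>
     (\<forall>x. sum_list (map (\<lambda>(a, b). a * S b) (cop x)) = smult (eps x) 1)"

definition character :: "('k::field \<Rightarrow> 'h::ring_1 \<Rightarrow> 'h) \<Rightarrow> ('h \<Rightarrow> 'k) \<Rightarrow> bool" where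
  "character smult f \<longleftrightarrow> lin_fun smult f \<and> f 1 = 1 \<and> (\<forall>x y. f (x * y) = f x * f y)"

definition bar :: "('k::field \<Rightarrow> 'h::ab_group_add \<Rightarrow> 'h) \<Rightarrow> (nat \<Rightarrow> 'h set) \<Rightarrow> ('h \<Rightarrow> 'k) \<Rightarrow> 'h \<Rightarrow> 'k" where
  "bar smult H f = (THE g. lin_fun smult g \<and> (\<forall>n. \<forall>h\<in>H n. g h = (-1) ^ n * f h))"

text \<open>Convolution inverse (for characters this is f o S)\<close>
definition conv_inv :: "('k::field \<Rightarrow> 'h::ab_group_add \<Rightarrow> 'h) \<Rightarrow> ('h \<Rightarrow> ('h \<times> 'h) list) \<Rightarrow> ('h \<Rightarrow> 'k)
    \<Rightarrow> ('h \<Rightarrow> 'k) \<Rightarrow> 'h \<Rightarrow> 'k" where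
  "conv_inv smult cop eps f = (THE g. lin_fun smult g \<and> conv cop g f = eps \<and> conv cop f g = eps)"

definition even_fun :: "('k::field \<Rightarrow> 'h::ab_group_add \<Rightarrow> 'h) \<Rightarrow> (nat \<Rightarrow> 'h set) \<Rightarrow> ('h \<Rightarrow> 'k) \<Rightarrow> bool" where
  "even_fun smult H f \<longleftrightarrow> bar smult H f = f"

definition odd_fun :: "('k::field \<Rightarrow> 'h::ab_group_add \<Rightarrow> 'h) \<Rightarrow> (nat \<Rightarrow> 'h set) \<Rightarrow> ('h \<Rightarrow> ('h \<times> 'h) list)
    \<Rightarrow> ('h \<Rightarrow> 'k) \<Rightarrow> ('h \<Rightarrow> 'k) \<Rightarrow> bool" where
  "odd_fun smult H cop eps f \<longleftrightarrow> bar smult H f = conv_inv smult cop eps f"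

end

theory Submission
  imports Defs "HOL-Library.Function_Algebras"
begin

(* Filter the convolution algebra of linear functionals by the subspaces I n of functionals
   vanishing in degrees below n.  As the coproduct is graded, I a * I b \<subseteq> I (a + b), and the
   filtration is separated and complete.  Among functionals equal to \<epsilon> in degree 0, the map
   \<rho> \<mapsto> \<rho>\<psi>\<rho> is 2 times the identity to first order: replacing \<rho> by \<rho> + h with h \<in> I n changes
   \<rho>\<psi>\<rho> by 2h modulo I (n + 1).  Since 2 is invertible this gives uniqueness, and the Newton
   iteration \<rho> \<mapsto> \<rho> + (\<phi> - \<rho>\<psi>\<rho>)/2 converges to a solution.

   The other claims follow from uniqueness.  The equation \<rho>\<psi>\<rho> = \<epsilon> provides convolution
   inverses.  If \<phi> and \<psi> are characters, then \<rho> \<circ> m and \<rho> \<otimes> \<rho> solve the same sandwich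
   equation among bilinear forms.  Finally f \<mapsto> bar f is an involutive automorphism of the
   convolution algebra: if bar \<phi> = \<psi>\<inverse> then bar \<rho> \<psi> bar \<rho> = \<phi>, so bar \<rho> = \<rho>; if bar \<phi> = \<psi>
   then bar \<rho> \<phi> bar \<rho> = \<psi> = \<rho>\<inverse> \<phi> \<rho>\<inverse>, so bar \<rho> = \<rho>\<inverse>. *)

section \<open>Complete filtered convolution algebras\<close>

definition scale_fun :: "'k::ring_1 \<Rightarrow> ('a \<Rightarrow> 'k) \<Rightarrow> 'a \<Rightarrow> 'k" where
  "scale_fun c f = (\<lambda>x. c * f x)"

lemma scale_fun_minus_one [simp]: "scale_fun (-1) f = - f"
  by (auto simp: scale_fun_def)

lemma scale_fun_two: "scale_fun 2 f = f + f"
  by (simp add: scale_fun_def fun_eq_iff mult_2)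

locale filtered_convolution =
  fixes V :: "('a \<Rightarrow> 'k::field) set" and cv :: "('a \<Rightarrow> 'k) \<Rightarrow> ('a \<Rightarrow> 'k) \<Rightarrow> 'a \<Rightarrow> 'k"
    and e :: "'a \<Rightarrow> 'k" and I :: "nat \<Rightarrow> ('a \<Rightarrow> 'k) set"
  assumes add_closed: "f \<in> V \<Longrightarrow> g \<in> V \<Longrightarrow> f + g \<in> V"
    and scale_closed: "f \<in> V \<Longrightarrow> scale_fun c f \<in> V"
    and unit_closed: "e \<in> V"
    and cv_closed: "f \<in> V \<Longrightarrow> g \<in> V \<Longrightarrow> cv f g \<in> V"
    and cv_add_left: "cv (f + g) h = cv f h + cv g h"
    and cv_add_right: "cv f (g + h) = cv f g + cv f h"
    and cv_scale_left: "cv (scale_fun c f) g = scale_fun c (cv f g)"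
    and cv_scale_right: "cv f (scale_fun c g) = scale_fun c (cv f g)"
    and cv_unit_left: "f \<in> V \<Longrightarrow> cv e f = f"
    and cv_unit_right: "f \<in> V \<Longrightarrow> cv f e = f"
    and filt_subset: "I n \<subseteq> V"
    and filt_zero: "0 \<in> I n"
    and filt_add: "f \<in> I n \<Longrightarrow> g \<in> I n \<Longrightarrow> f + g \<in> I n"
    and filt_scale: "f \<in> I n \<Longrightarrow> scale_fun c f \<in> I n"
    and filt_0: "I 0 = V"
    and filt_Suc: "I (Suc n) \<subseteq> I n"
    and filt_cv: "f \<in> I a \<Longrightarrow> g \<in> I b \<Longrightarrow> cv f g \<in> I (a + b)"
    and filt_separated: "(\<And>n. f \<in> I n) \<Longrightarrow> f = 0"
begin

definition unipotent :: "('a \<Rightarrow> 'k) \<Rightarrow> bool" where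
  "unipotent f \<longleftrightarrow> f \<in> V \<and> f - e \<in> I 1"

lemma unipotent_unit: "unipotent e"
  by (simp add: unipotent_def unit_closed filt_zero)

lemma diff_closed: "f \<in> V \<Longrightarrow> g \<in> V \<Longrightarrow> f - g \<in> V"
  using add_closed[of f "scale_fun (-1) g"] scale_closed[of g "-1"] by simp

lemma filt_uminus: "f \<in> I n \<Longrightarrow> - f \<in> I n"
  using filt_scale[of f n "-1"] by simp

lemma filt_diff: "f \<in> I n \<Longrightarrow> g \<in> I n \<Longrightarrow> f - g \<in> I n"
  using filt_add[OF _ filt_uminus[of g], of f] by simp

lemma filt_antimono: "m \<le> n \<Longrightarrow> f \<in> I n \<Longrightarrow> f \<in> I m"
  using lift_Suc_antimono_le[of I, OF filt_Suc] by blast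

lemma filt_closed: "f \<in> I n \<Longrightarrow> f \<in> V"
  using filt_subset by blast

lemma filt_cv_le: "f \<in> I a \<Longrightarrow> g \<in> I b \<Longrightarrow> n \<le> a + b \<Longrightarrow> cv f g \<in> I n"
  using filt_antimono filt_cv by blast

lemma cv_diff_left: "cv (f - g) h = cv f h - cv g h"
  using cv_add_left[of "f - g" g h] by (simp add: algebra_simps)

lemma cv_diff_right: "cv h (f - g) = cv h f - cv h g"
  using cv_add_right[of h "f - g" g] by (simp add: algebra_simps)

lemma sandwich_perturb:
  assumes \<rho>: "unipotent \<rho>" and \<psi>: "unipotent \<psi>" and h: "h \<in> I m" and m: "1 \<le> m"
  shows "cv (cv (\<rho> + h) \<psi>) (\<rho> + h) - cv (cv \<rho> \<psi>) \<rho> - scale_fun 2 h \<in> I (Suc m)"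
proof -
  define u where "u = \<rho> - e"
  define w where "w = \<psi> - e"
  have u: "u \<in> I 1" and w: "w \<in> I 1" and \<psi>0: "\<psi> \<in> I 0"
    using \<rho> \<psi> filt_0 unfolding u_def w_def unipotent_def by auto
  have uV: "u \<in> V" and wV: "w \<in> V" and hV: "h \<in> V" using u w h filt_closed by auto
  have \<rho>_eq: "\<rho> = e + u" and \<psi>_eq: "\<psi> = e + w" unfolding u_def w_def by simp_all
  have "cv (cv (\<rho> + h) \<psi>) (\<rho> + h) - cv (cv \<rho> \<psi>) \<rho> - scale_fun 2 h
     = cv w h + cv (cv u \<psi>) h + cv h w + cv (cv h \<psi>) u + cv (cv h \<psi>) h"
    unfolding \<rho>_eq \<psi>_eq
    by (simp only: cv_add_left cv_add_right)
      (simp add: cv_unit_left cv_unit_right uV wV hV unit_closed cv_closed add_closed scale_fun_two)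
  also have "\<dots> \<in> I (Suc m)"
    using m
    by (intro filt_add filt_cv_le[OF w h] filt_cv_le[OF filt_cv[OF u \<psi>0] h] filt_cv_le[OF h w]
        filt_cv_le[OF filt_cv[OF h \<psi>0] u] filt_cv_le[OF filt_cv[OF h \<psi>0] h]) simp_all
  finally show ?thesis .
qed

lemma sandwich_add_filt:
  assumes \<rho>: "unipotent \<rho>" and \<psi>: "unipotent \<psi>" and h: "h \<in> I m"
  shows "cv (cv (\<rho> + h) \<psi>) (\<rho> + h) - cv (cv \<rho> \<psi>) \<rho> \<in> I m"
proof (cases m)
  case 0
  have "\<rho> \<in> V" "\<psi> \<in> V" "h \<in> V" using \<rho> \<psi> h filt_closed unfolding unipotent_def by auto
  then show ?thesis using 0 filt_0 by (simp add: cv_closed add_closed diff_closed)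
next
  case (Suc k)
  let ?K = "cv (cv (\<rho> + h) \<psi>) (\<rho> + h) - cv (cv \<rho> \<psi>) \<rho> - scale_fun 2 h"
  have "?K \<in> I m" by (rule filt_antimono[OF _ sandwich_perturb[OF \<rho> \<psi> h]]) (simp_all add: Suc)
  from filt_add[OF this filt_scale[OF h, of 2]] show ?thesis by simp
qed

lemma scale_fun_half_two: "(2::'k) \<noteq> 0 \<Longrightarrow> scale_fun (1 / 2) (scale_fun 2 f) = (f :: 'a \<Rightarrow> 'k)"
  by (simp add: scale_fun_def fun_eq_iff field_simps)

lemma sandwich_unique:
  assumes two: "(2::'k) \<noteq> 0"
    and \<rho>: "unipotent \<rho>" and \<rho>': "unipotent \<rho>'" and \<psi>: "unipotent \<psi>"
    and eq: "cv (cv \<rho> \<psi>) \<rho> = cv (cv \<rho>' \<psi>) \<rho>'"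
  shows "\<rho> = \<rho>'"
proof -
  define d where "d = \<rho>' - \<rho>"
  have \<rho>'_eq: "\<rho>' = \<rho> + d" unfolding d_def by simp
  have "d \<in> I (Suc n)" for n
  proof (induction n)
    case 0
    have "(\<rho>' - e) - (\<rho> - e) \<in> I 1" using \<rho> \<rho>' unfolding unipotent_def by (blast intro: filt_diff)
    moreover have "(\<rho>' - e) - (\<rho> - e) = d" unfolding d_def by (simp add: fun_eq_iff)
    ultimately show ?case by simp
  next
    case (Suc n)
    have "cv (cv (\<rho> + d) \<psi>) (\<rho> + d) - cv (cv \<rho> \<psi>) \<rho> - scale_fun 2 d \<in> I (Suc (Suc n))"
      using sandwich_perturb[OF \<rho> \<psi> Suc] by simp
    then have "- scale_fun 2 d \<in> I (Suc (Suc n))" using eq \<rho>'_eq by simp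
    from filt_scale[OF filt_uminus[OF this], of "1 / 2"] show ?case
      using two by (simp add: scale_fun_half_two)
  qed
  then have "d \<in> I n" for n using filt_Suc[of n] by (cases n) auto
  then show ?thesis using filt_separated \<rho>'_eq by simp
qed

end

locale complete_filtered_convolution =
  filtered_convolution V cv e I for V :: "('a \<Rightarrow> 'k::field) set" and cv e I +
  assumes complete: "(\<And>k. F k \<in> V) \<Longrightarrow> (\<And>k. F (Suc k) - F k \<in> I k)
     \<Longrightarrow> \<exists>r\<in>V. \<forall>k. r - F k \<in> I k"
begin

lemma sandwich_newton_step:
  assumes two: "(2::'k) \<noteq> 0" and \<psi>: "unipotent \<psi>" and r: "unipotent r"
    and err: "\<phi> - cv (cv r \<psi>) r \<in> I (Suc k)"
  defines "r' \<equiv> r + scale_fun (1 / 2) (\<phi> - cv (cv r \<psi>) r)"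
  shows "unipotent r'" and "\<phi> - cv (cv r' \<psi>) r' \<in> I (Suc (Suc k))"
proof -
  define h where "h = scale_fun (1 / 2) (\<phi> - cv (cv r \<psi>) r)"
  have h: "h \<in> I (Suc k)" unfolding h_def using err by (rule filt_scale)
  have r'_eq: "r' = r + h" unfolding r'_def h_def ..
  have "(r - e) + h \<in> I 1"
    using r filt_antimono[OF _ h] unfolding unipotent_def by (intro filt_add) simp_all
  then show "unipotent r'" using r filt_closed[OF h] unfolding unipotent_def r'_eq
    by (simp add: add_closed add_diff_eq diff_add_eq)
  have "scale_fun 2 h = \<phi> - cv (cv r \<psi>) r"
    unfolding h_def using two by (simp add: scale_fun_def fun_eq_iff field_simps)
  then have "\<phi> - cv (cv r' \<psi>) r' = - (cv (cv (r + h) \<psi>) (r + h) - cv (cv r \<psi>) r - scale_fun 2 h)"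
    unfolding r'_eq by (simp add: algebra_simps)
  also have "\<dots> \<in> I (Suc (Suc k))" using sandwich_perturb[OF r \<psi> h] by (rule filt_uminus) simp
  finally show "\<phi> - cv (cv r' \<psi>) r' \<in> I (Suc (Suc k))" .
qed

lemma sandwich_exists:
  assumes two: "(2::'k) \<noteq> 0" and \<phi>: "unipotent \<phi>" and \<psi>: "unipotent \<psi>"
  shows "\<exists>\<rho>. unipotent \<rho> \<and> cv (cv \<rho> \<psi>) \<rho> = \<phi>"
proof -
  define F where "F = rec_nat e (\<lambda>_ r. r + scale_fun (1 / 2) (\<phi> - cv (cv r \<psi>) r))"
  have F: "unipotent (F k) \<and> \<phi> - cv (cv (F k) \<psi>) (F k) \<in> I (Suc k)" for k
  proof (induction k)
    case 0
    have F0: "F 0 = e" unfolding F_def by simp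
    have "\<phi> - cv (cv (F 0) \<psi>) (F 0) = (\<phi> - e) - (\<psi> - e)"
      using \<psi> unfolding F0 unipotent_def by (simp add: cv_unit_left cv_unit_right)
    also have "\<dots> \<in> I 1" using \<phi> \<psi> unfolding unipotent_def by (blast intro: filt_diff)
    finally show ?case using unipotent_unit unfolding F0 One_nat_def by blast
  next
    case (Suc k)
    have FS: "F (Suc k) = F k + scale_fun (1 / 2) (\<phi> - cv (cv (F k) \<psi>) (F k))"
      unfolding F_def by simp
    show ?case unfolding FS using sandwich_newton_step[OF two \<psi>, of "F k" \<phi> k] Suc.IH by blast
  qed
  have "F (Suc k) - F k \<in> I k" for k
    using filt_antimono[OF _ filt_scale[of _ "Suc k" "1 / 2"]] F by (simp add: F_def)
  then obtain \<rho> where lim: "\<And>k. \<rho> - F k \<in> I k"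
    using complete[of F] F unfolding unipotent_def by blast
  have "\<rho> - e = (\<rho> - F 1) + (F 1 - e)" by simp
  also have "\<dots> \<in> I 1" using lim F unfolding unipotent_def by (blast intro: filt_add)
  finally have "\<rho> - e \<in> I 1" .
  moreover from add_closed[OF filt_closed[OF this] unit_closed] have "\<rho> \<in> V" by simp
  ultimately have \<rho>: "unipotent \<rho>" unfolding unipotent_def by blast
  have "cv (cv \<rho> \<psi>) \<rho> - \<phi> \<in> I n" for n
  proof -
    define h where "h = \<rho> - F n"
    have h: "h \<in> I n" unfolding h_def by (rule lim)
    have "cv (cv \<rho> \<psi>) \<rho> - \<phi>
        = (cv (cv (F n + h) \<psi>) (F n + h) - cv (cv (F n) \<psi>) (F n)) - (\<phi> - cv (cv (F n) \<psi>) (F n))"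
      unfolding h_def by simp
    also have "\<dots> \<in> I n"
      using F[of n]
      by (intro filt_diff[OF sandwich_add_filt[OF _ \<psi> h] filt_antimono[of n "Suc n"]]) simp_all
    finally show ?thesis .
  qed
  then have "cv (cv \<rho> \<psi>) \<rho> - \<phi> = 0" by (rule filt_separated)
  then show ?thesis using \<rho> by auto
qed

end

locale complete_filtered_monoid =
  complete_filtered_convolution V cv e I for V :: "('a \<Rightarrow> 'k::field) set" and cv e I +
  assumes cv_assoc: "f \<in> V \<Longrightarrow> g \<in> V \<Longrightarrow> h \<in> V \<Longrightarrow> cv (cv f g) h = cv f (cv g h)"
begin

lemma left_right_inverse_eq:
  assumes "x \<in> V" "y \<in> V" "y' \<in> V" "cv y x = e" "cv x y' = e"
  shows "y = y'"
proof -
  have "y = cv y (cv x y')" using assms by (simp add: cv_unit_right)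
  also have "\<dots> = cv (cv y x) y'" using cv_assoc[OF assms(2,1,3)] by simp
  also have "\<dots> = y'" using assms by (simp add: cv_unit_left)
  finally show ?thesis .
qed

lemma unipotent_cv:
  assumes x: "unipotent x" and y: "unipotent y"
  shows "unipotent (cv x y)"
proof -
  have V: "x \<in> V" "y \<in> V" and I: "x - e \<in> I 1" "y - e \<in> I 1"
    using x y unfolding unipotent_def by auto
  have "cv x y - e = cv (x - e) (y - e) + (x - e) + (y - e)"
    using V by (simp add: cv_diff_left cv_diff_right cv_unit_left cv_unit_right unit_closed)
  also have "\<dots> \<in> I 1" using I by (intro filt_add filt_cv_le[OF I]) simp_all
  finally show ?thesis using cv_closed[OF V] unfolding unipotent_def by blast
qed

text \<open>Inverses come for free from the sandwich equation \<open>\<rho> x \<rho> = e\<close>: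
  \<open>\<rho>\<close> then has left inverse \<open>\<rho> x\<close> and right inverse \<open>x \<rho>\<close>,
  which must agree, and \<open>\<rho> \<rho>\<close> inverts \<open>x\<close>.\<close>
lemma inverse_exists:
  assumes two: "(2::'k) \<noteq> 0" and x: "unipotent x"
  shows "\<exists>y. unipotent y \<and> cv y x = e \<and> cv x y = e"
proof -
  obtain \<rho> where \<rho>: "unipotent \<rho>" and eq: "cv (cv \<rho> x) \<rho> = e"
    using sandwich_exists[OF two unipotent_unit x] by blast
  have V: "x \<in> V" "\<rho> \<in> V" using x \<rho> unfolding unipotent_def by auto
  have "cv \<rho> (cv x \<rho>) = e" using eq cv_assoc[OF V(2,1,2)] by simp
  then have same: "cv \<rho> x = cv x \<rho>"
    using left_right_inverse_eq[OF V(2) _ _ eq] V by (simp add: cv_closed)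
  have "cv (cv \<rho> \<rho>) x = cv \<rho> (cv x \<rho>)" using V by (simp add: cv_assoc same)
  moreover have "cv x (cv \<rho> \<rho>) = cv (cv \<rho> x) \<rho>" using V by (simp add: cv_assoc same)
  moreover have "cv \<rho> (cv x \<rho>) = e" using eq V by (simp add: cv_assoc)
  ultimately have "cv (cv \<rho> \<rho>) x = e" "cv x (cv \<rho> \<rho>) = e" using eq by simp_all
  then show ?thesis using unipotent_cv[OF \<rho> \<rho>] by blast
qed

end

locale filtered_involution =
  complete_filtered_monoid V cv e I for V :: "('a \<Rightarrow> 'k::field) set" and cv e I +
  fixes b :: "('a \<Rightarrow> 'k) \<Rightarrow> 'a \<Rightarrow> 'k"
  assumes b_closed: "f \<in> V \<Longrightarrow> b f \<in> V"
    and b_involutive: "f \<in> V \<Longrightarrow> b (b f) = f"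
    and b_cv: "f \<in> V \<Longrightarrow> g \<in> V \<Longrightarrow> b (cv f g) = cv (b f) (b g)"
    and b_unipotent: "unipotent f \<Longrightarrow> unipotent (b f)"
begin

lemma b_unit: "b e = e"
proof -
  have V: "b e \<in> V" "e \<in> V" by (simp_all add: b_closed unit_closed)
  have "b e = cv (b e) (b (b e))" using V by (simp add: b_involutive cv_unit_right)
  also have "\<dots> = b (cv e (b e))" using V by (simp add: b_cv)
  also have "\<dots> = e" using V by (simp add: cv_unit_left b_involutive)
  finally show ?thesis .
qed

text \<open>With \<open>\<sigma> = b \<rho>\<close>, \<open>\<beta> = b \<psi>\<close> and \<open>q = \<psi>\<inverse>\<close>, applying \<open>b\<close> gives \<open>\<sigma> \<beta> \<sigma> = q\<close> and
  \<open>\<beta> = \<phi>\<inverse>\<close>; so \<open>\<sigma> \<psi> \<sigma>\<close> inverts \<open>\<beta>\<close>, i.e. \<open>\<sigma> \<psi> \<sigma> = \<phi>\<close>.\<close>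
lemma sandwich_even:
  assumes two: "(2::'k) \<noteq> 0" and \<rho>: "unipotent \<rho>" and \<psi>: "unipotent \<psi>"
    and eq: "cv (cv \<rho> \<psi>) \<rho> = \<phi>"
    and q: "q \<in> V" "cv q \<psi> = e" "cv \<psi> q = e" and b\<phi>: "b \<phi> = q"
  shows "b \<rho> = \<rho>"
proof -
  define \<sigma> where "\<sigma> = b \<rho>"
  define \<beta> where "\<beta> = b \<psi>"
  define X where "X = cv (cv \<sigma> \<psi>) \<sigma>"
  have \<sigma>: "unipotent \<sigma>" unfolding \<sigma>_def using \<rho> by (rule b_unipotent)
  have V: "\<rho> \<in> V" "\<psi> \<in> V" "\<sigma> \<in> V" "\<beta> \<in> V"
    using \<rho> \<psi> \<sigma> b_closed unfolding unipotent_def \<beta>_def by auto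
  have \<phi>: "\<phi> \<in> V" using eq V by (metis cv_closed)
  have \<sigma>\<beta>\<sigma>: "cv (cv \<sigma> \<beta>) \<sigma> = q"
    using V b\<phi>[folded eq] unfolding \<sigma>_def \<beta>_def by (simp add: b_cv cv_closed)
  have \<beta>\<phi>: "cv \<beta> \<phi> = e"
    using b_cv[OF V(2) q(1)] q(3) b\<phi> b_involutive[OF \<phi>] unfolding \<beta>_def by (simp add: b_unit)
  obtain s where s: "s \<in> V" "cv \<sigma> s = e"
    using inverse_exists[OF two \<sigma>] unfolding unipotent_def by blast
  have "cv (cv X \<beta>) \<sigma> = cv \<sigma> (cv \<psi> (cv (cv \<sigma> \<beta>) \<sigma>))"
    using V unfolding X_def by (simp add: cv_assoc cv_closed)
  then have X\<beta>\<sigma>: "cv (cv X \<beta>) \<sigma> = \<sigma>" using V q by (simp add: \<sigma>\<beta>\<sigma> cv_unit_right)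
  have XV: "X \<in> V" unfolding X_def using V by (simp add: cv_closed)
  have "cv X \<beta> = cv (cv (cv X \<beta>) \<sigma>) s"
    using V XV s by (simp add: cv_assoc cv_closed cv_unit_right)
  then have X\<beta>: "cv X \<beta> = e" using X\<beta>\<sigma> s by simp
  have "X = cv (cv X \<beta>) \<phi>" using V XV \<phi> by (simp add: cv_assoc \<beta>\<phi> cv_unit_right)
  then have "cv (cv \<sigma> \<psi>) \<sigma> = cv (cv \<rho> \<psi>) \<rho>" using X\<beta> \<phi> eq by (simp add: X_def cv_unit_left)
  then show ?thesis using sandwich_unique[OF two \<sigma> \<rho> \<psi>] unfolding \<sigma>_def by blast
qed

lemma sandwich_odd:
  assumes two: "(2::'k) \<noteq> 0"
    and \<rho>: "unipotent \<rho>" and \<psi>: "unipotent \<psi>" and \<phi>: "unipotent \<phi>"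
    and eq: "cv (cv \<rho> \<psi>) \<rho> = \<phi>" and b\<phi>: "b \<phi> = \<psi>"
    and \<tau>: "unipotent \<tau>" "cv \<tau> \<rho> = e" "cv \<rho> \<tau> = e"
  shows "b \<rho> = \<tau>"
proof -
  have V: "\<rho> \<in> V" "\<psi> \<in> V" "\<phi> \<in> V" "\<tau> \<in> V"
    using \<rho> \<psi> \<phi> \<tau> unfolding unipotent_def by auto
  have "cv (cv (b \<rho>) \<phi>) (b \<rho>) = \<psi>"
    using V eq b\<phi> b_involutive[OF V(3)] by (metis b_cv cv_closed)
  moreover have "cv (cv \<tau> \<phi>) \<tau> = cv (cv (cv \<tau> \<rho>) \<psi>) (cv \<rho> \<tau>)"
    using V by (simp add: eq[symmetric] cv_assoc cv_closed)
  ultimately have "cv (cv (b \<rho>) \<phi>) (b \<rho>) = cv (cv \<tau> \<phi>) \<tau>"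
    using V \<tau> by (simp add: cv_unit_left cv_unit_right)
  then show ?thesis using sandwich_unique[OF two b_unipotent[OF \<rho>] \<tau>(1) \<phi>] by blast
qed

end

section \<open>Graded bialgebras and homogeneous components\<close>

lemma pairsum_alt: "pairsum f g xs = sum_list (map (\<lambda>u. f (fst u) * g (snd u)) xs)"
  unfolding pairsum_def by (simp add: case_prod_unfold)

lemma sum_list_map_eq_zero:
  "(\<And>u. u \<in> set xs \<Longrightarrow> F u = (0::'a::monoid_add)) \<Longrightarrow> sum_list (map F xs) = 0"
  by (induction xs) auto

lemma sum_list_map_swap:
  "sum_list (map (\<lambda>u. sum_list (map (F u) ys)) xs)
    = sum_list (map (\<lambda>v. sum_list (map (\<lambda>u. F u v) xs)) ys)"
  for F :: "_ \<Rightarrow> _ \<Rightarrow> 'a::comm_monoid_add"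
  by (induction xs) (simp_all add: sum_list_addf)

lemma conv_add_left: "conv cop (f + f') g = conv cop f g + conv cop f' g"
  by (simp add: fun_eq_iff conv_def pairsum_alt algebra_simps sum_list_addf)

lemma conv_add_right: "conv cop f (g + g') = conv cop f g + conv cop f g'"
  by (simp add: fun_eq_iff conv_def pairsum_alt algebra_simps sum_list_addf)

lemma conv_scale_left: "conv cop (scale_fun c f) g = scale_fun c (conv cop f g)"
  by (simp add: fun_eq_iff conv_def pairsum_alt scale_fun_def mult.assoc sum_list_const_mult)

lemma conv_scale_right: "conv cop f (scale_fun c g) = scale_fun c (conv cop f g)"
  by (simp add: fun_eq_iff conv_def pairsum_alt scale_fun_def mult.left_commute sum_list_const_mult)

lemma vector_space_field: "vector_space ((*) :: 'k::field \<Rightarrow> 'k \<Rightarrow> 'k)"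
  by unfold_locales (simp_all add: algebra_simps)

locale graded_bialgebra =
  fixes smult :: "'k::field \<Rightarrow> 'h::ring_1 \<Rightarrow> 'h" and H :: "nat \<Rightarrow> 'h set"
    and cop :: "'h \<Rightarrow> ('h \<times> 'h) list" and eps :: "'h \<Rightarrow> 'k"
  assumes vector_space: "vector_space smult"
    and smult_mult_left: "smult c (x * y) = smult c x * y"
    and smult_mult_right: "smult c (x * y) = x * smult c y"
    and subspace_H: "module.subspace smult (H n)"
    and span_H: "\<exists>N. x \<in> module.span smult (\<Union>n\<le>N. H n)"
    and H_independent:
      "(\<And>n. n \<le> N \<Longrightarrow> xs n \<in> H n) \<Longrightarrow> (\<Sum>n\<le>N. xs n) = 0 \<Longrightarrow> n \<le> N \<Longrightarrow> xs n = 0"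
    and one_in_H0: "1 \<in> H 0"
    and mult_H: "x \<in> H m \<Longrightarrow> y \<in> H n \<Longrightarrow> x * y \<in> H (m + n)"
    and cop_add: "lin_fun smult f \<Longrightarrow> lin_fun smult g \<Longrightarrow>
      pairsum f g (cop (x + y)) = pairsum f g (cop x) + pairsum f g (cop y)"
    and cop_scale: "lin_fun smult f \<Longrightarrow> lin_fun smult g \<Longrightarrow>
      pairsum f g (cop (smult c x)) = c * pairsum f g (cop x)"
    and cop_graded:
      "x \<in> H n \<Longrightarrow> u \<in> set (cop x) \<Longrightarrow> \<exists>i\<le>n. fst u \<in> H i \<and> snd u \<in> H (n - i)"
    and coassoc: "lin_fun smult f \<Longrightarrow> lin_fun smult g \<Longrightarrow> lin_fun smult k \<Longrightarrow>
      conv cop (conv cop f g) k = conv cop f (conv cop g k)"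
    and eps_linear: "lin_fun smult eps"
    and counit_left: "sum_list (map (\<lambda>u. smult (eps (fst u)) (snd u)) (cop x)) = x"
    and counit_right: "sum_list (map (\<lambda>u. smult (eps (snd u)) (fst u)) (cop x)) = x"
    and cop_mult: "lin_fun smult f \<Longrightarrow> lin_fun smult g \<Longrightarrow>
      pairsum f g (cop (x * y)) =
        sum_list (map (\<lambda>u. sum_list (map (\<lambda>v. f (fst u * fst v) * g (snd u * snd v)) (cop y))) (cop x))"
    and eps_one: "eps 1 = 1"
    and eps_mult: "eps (x * y) = eps x * eps y"

lemma graded_connected_hopf_algebra_imp_graded_bialgebra:
  assumes "graded_connected_hopf_algebra smult H cop eps S"
  shows "graded_bialgebra smult H cop eps"
proof -
  note A = assms[unfolded graded_connected_hopf_algebra_def]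
  interpret vector_space smult using A by blast
  have "1 \<in> H 0" using A rangeI[of "\<lambda>c. smult c 1" 1] by simp
  show ?thesis
  proof unfold_locales
    have "\<forall>c x y. smult c (x * y) = smult c x * y \<and> smult c (x * y) = x * smult c y"
      using A by (elim conjE) assumption
    then show "smult c (x * y) = x * smult c y" for c x y by blast
    have "\<forall>N xs. (\<forall>n\<le>N. xs n \<in> H n) \<and> (\<Sum>n\<le>N. xs n) = 0 \<longrightarrow> (\<forall>n\<le>N. xs n = 0)"
      using A by (elim conjE) assumption
    then show "xs n = 0"
      if "\<And>n. n \<le> N \<Longrightarrow> xs n \<in> H n" "(\<Sum>n\<le>N. xs n) = 0" "n \<le> N" for N xs n
      using that by blast
  qed (use A \<open>1 \<in> H 0\<close> in \<open>auto simp: case_prod_unfold fun_eq_iff\<close>)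
qed

context graded_bialgebra
begin

abbreviation lin :: "('h \<Rightarrow> 'k) \<Rightarrow> bool" where
  "lin \<equiv> lin_fun smult"

sublocale vs: vector_space smult by (rule vector_space)

sublocale fun_pair: vector_space_pair smult "(*) :: 'k \<Rightarrow> 'k \<Rightarrow> 'k"
  rewrites "Vector_Spaces.linear smult (*) = lin_fun smult"
proof -
  show "vector_space_pair smult ((*) :: 'k \<Rightarrow> 'k \<Rightarrow> 'k)"
    using vector_space vector_space_field by (rule vector_space_pair.intro)
  show "Vector_Spaces.linear smult (*) = lin_fun smult"
    by (simp add: fun_eq_iff lin_fun_def)
qed

lemma linI: "(\<And>x y. f (x + y) = f x + f y) \<Longrightarrow> (\<And>c x. f (smult c x) = c * f x) \<Longrightarrow> lin f"
  unfolding lin_fun_def Vector_Spaces.linear_iff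
  using vector_space vector_space_field by blast

lemma lin_zero_fun: "lin 0"
  unfolding zero_fun_def by (rule fun_pair.linear_zero)

lemma lin_add_fun: "lin f \<Longrightarrow> lin g \<Longrightarrow> lin (f + g)"
  unfolding plus_fun_def by (rule fun_pair.linear_compose_add)

lemma lin_diff_fun: "lin f \<Longrightarrow> lin g \<Longrightarrow> lin (f - g)"
  unfolding fun_diff_def by (rule fun_pair.linear_compose_sub)

lemma lin_sum_list: "lin f \<Longrightarrow> f (sum_list (map g xs)) = sum_list (map (\<lambda>u. f (g u)) xs)"
  by (induction xs) (simp_all add: fun_pair.linear_0 fun_pair.linear_add)

lemma lin_sum_list_fun:
  "(\<And>z. z \<in> set zs \<Longrightarrow> lin (G z)) \<Longrightarrow> lin (\<lambda>x. sum_list (map (\<lambda>z. G z x) zs))"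
  by (induction zs) (simp_all add: fun_pair.linear_zero fun_pair.linear_compose_add)

lemma lin_mult_const: "lin f \<Longrightarrow> lin (\<lambda>x. f x * c)"
  using fun_pair.linear_compose_scale_right[of f c] by (simp add: mult.commute)

lemma conv_lin: "lin f \<Longrightarrow> lin g \<Longrightarrow> lin (conv cop f g)"
  unfolding conv_def by (intro linI) (simp_all add: cop_add cop_scale)

lemma conv_eps_left:
  assumes f: "lin f" shows "conv cop eps f = f"
proof
  fix x
  have "f x = f (sum_list (map (\<lambda>u. smult (eps (fst u)) (snd u)) (cop x)))"
    by (simp only: counit_left)
  also have "\<dots> = conv cop eps f x"
    using f by (simp add: lin_sum_list fun_pair.linear_scale conv_def pairsum_alt)
  finally show "conv cop eps f x = f x" by simp
qed

lemma conv_eps_right: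
  assumes f: "lin f" shows "conv cop f eps = f"
proof
  fix x
  have "f x = f (sum_list (map (\<lambda>u. smult (eps (snd u)) (fst u)) (cop x)))"
    by (simp only: counit_right)
  also have "\<dots> = conv cop f eps x"
    using f by (simp add: lin_sum_list fun_pair.linear_scale conv_def pairsum_alt mult.commute)
  finally show "conv cop f eps x = f x" by simp
qed

lemma homogeneous_decomposition: "\<exists>N xs. (\<forall>n. xs n \<in> H n) \<and> x = (\<Sum>n\<le>N. xs n)"
proof -
  obtain N where "x \<in> vs.span (\<Union>n\<le>N. H n)" using span_H by blast
  then have "\<exists>xs. (\<forall>n. xs n \<in> H n) \<and> x = (\<Sum>n\<le>N. xs n)"
  proof (induction rule: vs.span_induct_alt)
    case base
    show ?case using vs.subspace_0[OF subspace_H] by (intro exI[of _ "\<lambda>_. 0"]) simp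
  next
    case (step c z y)
    then obtain m xs where m: "m \<le> N" "z \<in> H m" and xs: "\<forall>n. xs n \<in> H n" "y = (\<Sum>n\<le>N. xs n)"
      by blast
    define xs' where "xs' n = (if n = m then smult c z + xs n else xs n)" for n
    have "\<forall>n. xs' n \<in> H n"
      using xs(1) m(2) vs.subspace_add[OF subspace_H] vs.subspace_scale[OF subspace_H]
      unfolding xs'_def by auto
    moreover have "(\<Sum>n\<le>N. xs' n) = (\<Sum>n\<le>N. (if n = m then smult c z else 0) + xs n)"
      unfolding xs'_def by (intro sum.cong) auto
    then have "smult c z + y = (\<Sum>n\<le>N. xs' n)" using m(1) xs(2) by (simp add: sum.distrib)
    ultimately show ?case by blast
  qed
  then show ?thesis by blast
qed

lemma sum_extend:
  assumes "(N::nat) \<le> K" shows "(\<Sum>n\<le>K. if n \<le> N then xs n else (0::'h)) = (\<Sum>n\<le>N. xs n)"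
proof -
  have "(\<Sum>n\<le>K. if n \<le> N then xs n else (0::'h)) = (\<Sum>n\<le>N. if n \<le> N then xs n else 0)"
    using assms by (intro sum.mono_neutral_right) auto
  then show ?thesis by simp
qed

lemma homogeneous_decomposition_unique:
  assumes "\<forall>n. xs n \<in> H n" "\<forall>n. ys n \<in> H n" "(\<Sum>n\<le>N. xs n) = (\<Sum>n\<le>N. ys n)" "n \<le> N"
  shows "xs n = ys n"
proof -
  have "(\<Sum>n\<le>N. xs n - ys n) = 0" using assms(3) by (simp add: sum_subtractf)
  moreover have "xs n - ys n \<in> H n" for n using assms(1,2) vs.subspace_diff[OF subspace_H] by blast
  ultimately show ?thesis using H_independent[of N "\<lambda>n. xs n - ys n" n] assms(4) by simp
qed

definition deg_bound :: "'h \<Rightarrow> nat" where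
  "deg_bound x = (SOME N. \<exists>xs. (\<forall>n. xs n \<in> H n) \<and> x = (\<Sum>n\<le>N. xs n))"

definition component :: "nat \<Rightarrow> 'h \<Rightarrow> 'h" where
  "component n x = (if n \<le> deg_bound x
     then (SOME xs. (\<forall>n. xs n \<in> H n) \<and> x = (\<Sum>n\<le>deg_bound x. xs n)) n else 0)"

lemma component_above: "deg_bound x < n \<Longrightarrow> component n x = 0"
  unfolding component_def by simp

lemma component_H: "component n x \<in> H n"
  and sum_component_deg_bound: "x = (\<Sum>n\<le>deg_bound x. component n x)"
proof -
  define xs where "xs = (SOME xs. (\<forall>n. xs n \<in> H n) \<and> x = (\<Sum>n\<le>deg_bound x. xs n))"
  have "\<exists>xs. (\<forall>n. xs n \<in> H n) \<and> x = (\<Sum>n\<le>deg_bound x. xs n)"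
    unfolding deg_bound_def using homogeneous_decomposition by (rule someI_ex)
  then have xs: "(\<forall>n. xs n \<in> H n) \<and> x = (\<Sum>n\<le>deg_bound x. xs n)"
    unfolding xs_def by (rule someI_ex)
  have component: "component n x = (if n \<le> deg_bound x then xs n else 0)" for n
    unfolding component_def xs_def ..
  show "component n x \<in> H n"
    using xs vs.subspace_0[OF subspace_H] unfolding component by simp
  show "x = (\<Sum>n\<le>deg_bound x. component n x)"
    using xs unfolding component by simp
qed

lemma sum_component: "deg_bound x \<le> K \<Longrightarrow> x = (\<Sum>n\<le>K. component n x)"
  using sum_component_deg_bound[of x] component_above[of x]
  by (metis (no_types, lifting) sum.mono_neutral_right finite_atMost atMost_iff
      atMost_subset_iff Diff_iff not_le)

lemma component_eq:
  assumes xs: "\<forall>n. xs n \<in> H n" and x: "x = (\<Sum>n\<le>N. xs n)"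
  shows "component n x = (if n \<le> N then xs n else 0)"
proof -
  define ys where "ys n = (if n \<le> N then xs n else 0)" for n
  define K where "K = max N (deg_bound x)"
  have ys: "\<forall>n. ys n \<in> H n" using xs vs.subspace_0[OF subspace_H] unfolding ys_def by simp
  have "(\<Sum>n\<le>K. ys n) = (\<Sum>n\<le>K. component n x)"
    using sum_extend[of N K xs] x sum_component[of x K] unfolding K_def ys_def by simp
  then have "n \<le> K \<Longrightarrow> ys n = component n x"
    using homogeneous_decomposition_unique[OF ys, of "\<lambda>n. component n x"] component_H by blast
  then show ?thesis
    using component_above[of x n] unfolding ys_def by (cases "n \<le> K") (auto simp: K_def)
qed

lemma component_add: "component n (x + y) = component n x + component n y"
proof -
  define K where "K = max (deg_bound x) (deg_bound y)"
  have "x + y = (\<Sum>n\<le>K. component n x + component n y)"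
    using sum_component[of x K] sum_component[of y K] unfolding K_def by (simp add: sum.distrib)
  moreover have "\<forall>n. component n x + component n y \<in> H n"
    using component_H vs.subspace_add[OF subspace_H] by blast
  ultimately have "component n (x + y) = (if n \<le> K then component n x + component n y else 0)"
    by (intro component_eq[of "\<lambda>n. component n x + component n y"])
  then show ?thesis using component_above[of x n] component_above[of y n] unfolding K_def by auto
qed

lemma component_scale: "component n (smult c x) = smult c (component n x)"
proof -
  have "smult c x = smult c (\<Sum>n\<le>deg_bound x. component n x)"
    using sum_component_deg_bound by (rule arg_cong)
  also have "\<dots> = (\<Sum>n\<le>deg_bound x. smult c (component n x))" by (rule vs.scale_sum_right)
  finally have "component n (smult c x) = (if n \<le> deg_bound x then smult c (component n x) else 0)"
    using component_H vs.subspace_scale[OF subspace_H]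
    by (intro component_eq[of "\<lambda>n. smult c (component n x)"]) blast+
  then show ?thesis using component_above[of x n] by auto
qed

lemma component_homogeneous: "h \<in> H m \<Longrightarrow> component n h = (if n = m then h else 0)"
  using component_eq[of "\<lambda>n. if n = m then h else 0" h m n] vs.subspace_0[OF subspace_H]
  by (auto split: if_splits)

lemma lin_eq_homogeneous:
  assumes f: "lin f" and g: "lin g" and fg: "\<And>n h. h \<in> H n \<Longrightarrow> f h = g h"
  shows "f = g"
proof
  fix x
  have "f x = (\<Sum>n\<le>deg_bound x. f (component n x))"
    using fun_pair.linear_sum[OF f] sum_component_deg_bound[of x] by metis
  also have "\<dots> = (\<Sum>n\<le>deg_bound x. g (component n x))" using fg[OF component_H] by simp
  also have "\<dots> = g x"
    using fun_pair.linear_sum[OF g] sum_component_deg_bound[of x] by metis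
  finally show "f x = g x" .
qed

definition glue :: "(nat \<Rightarrow> 'h \<Rightarrow> 'k) \<Rightarrow> 'h \<Rightarrow> 'k" where
  "glue F x = (\<Sum>n\<le>deg_bound x. F n (component n x))"

lemma glue_extend:
  assumes F: "\<And>n. lin (F n)" and K: "deg_bound x \<le> K"
  shows "glue F x = (\<Sum>n\<le>K. F n (component n x))"
  unfolding glue_def
  by (rule sum.mono_neutral_left) (use K component_above fun_pair.linear_0[OF F] in auto)

lemma lin_glue:
  assumes F: "\<And>n. lin (F n)"
  shows "lin (glue F)"
proof (rule linI)
  fix x y
  define K where "K = max (deg_bound (x + y)) (max (deg_bound x) (deg_bound y))"
  show "glue F (x + y) = glue F x + glue F y"
    using glue_extend[of F, OF F, of "x + y" K] glue_extend[of F, OF F, of x K]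
      glue_extend[of F, OF F, of y K]
    by (simp add: K_def component_add fun_pair.linear_add[OF F] sum.distrib)
next
  fix c x
  define K where "K = max (deg_bound (smult c x)) (deg_bound x)"
  show "glue F (smult c x) = c * glue F x"
    using glue_extend[of F, OF F, of "smult c x" K] glue_extend[of F, OF F, of x K]
    by (simp add: K_def component_scale fun_pair.linear_scale[OF F] sum_distrib_left)
qed

lemma glue_homogeneous:
  assumes F: "\<And>n. lin (F n)" and h: "h \<in> H m"
  shows "glue F h = F m h"
proof -
  have "F n 0 = 0" for n using fun_pair.linear_0[OF F[of n]] .
  then show ?thesis using glue_extend[of F, OF F, of h "max m (deg_bound h)"]
    by (simp add: component_homogeneous[OF h] if_distrib cong: if_cong)
qed

section \<open>The convolution algebra of linear functionals\<close>

definition lin_funs :: "('h \<Rightarrow> 'k) set" where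
  "lin_funs = {f. lin f}"

definition vanish_below :: "nat \<Rightarrow> ('h \<Rightarrow> 'k) set" where
  "vanish_below n = {f. lin f \<and> (\<forall>m<n. \<forall>h\<in>H m. f h = 0)}"

lemma conv_vanish_below:
  assumes f: "f \<in> vanish_below a" and g: "g \<in> vanish_below b"
  shows "conv cop f g \<in> vanish_below (a + b)"
proof -
  have "f (fst u) * g (snd u) = 0" if m: "m < a + b" and h: "h \<in> H m" and u: "u \<in> set (cop h)"
    for m h u
  proof -
    obtain i where i: "i \<le> m" "fst u \<in> H i" "snd u \<in> H (m - i)" using cop_graded[OF h u] by blast
    moreover have "i < a \<or> m - i < b" using m i(1) by linarith
    ultimately have "f (fst u) = 0 \<or> g (snd u) = 0" using f g unfolding vanish_below_def by blast
    then show ?thesis by auto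
  qed
  then show ?thesis using f g conv_lin unfolding vanish_below_def conv_def pairsum_alt
    by (auto intro: sum_list_map_eq_zero)
qed

lemma vanish_below_all_eq_zero:
  assumes "\<And>n. f \<in> vanish_below n" shows "f = 0"
proof (rule lin_eq_homogeneous)
  show "lin f" using assms[of 0] unfolding vanish_below_def by blast
  show "f h = 0 h" if "h \<in> H n" for n h
    using assms[of "Suc n"] that unfolding vanish_below_def by auto
qed (rule lin_zero_fun)

text \<open>The limit is glued from the values that the sequence eventually takes in each degree.\<close>
lemma vanish_below_complete:
  assumes F: "\<And>k. F k \<in> lin_funs" and Cauchy: "\<And>k. F (Suc k) - F k \<in> vanish_below k"
  shows "\<exists>r\<in>lin_funs. \<forall>k. r - F k \<in> vanish_below k"
proof -
  have lin: "lin (F k)" for k using F unfolding lin_funs_def by blast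
  define r where "r = glue (\<lambda>m. F (Suc m))"
  have r: "lin r" unfolding r_def by (rule lin_glue) (rule lin)
  have stable: "F k h = F (Suc m) h" if "Suc m \<le> k" "h \<in> H m" for k m h
    using that(1)
  proof (induction k rule: dec_induct)
    case (step j)
    then have "m < j" by simp
    then have "(F (Suc j) - F j) h = 0" using Cauchy[of j] that(2) unfolding vanish_below_def by blast
    then show ?case using step.IH by simp
  qed simp
  have "r - F k \<in> vanish_below k" for k
    using stable glue_homogeneous[of "\<lambda>m. F (Suc m)", OF lin] lin_diff_fun[OF r lin]
    unfolding vanish_below_def r_def by (auto simp: Suc_le_eq)
  then show ?thesis using r unfolding lin_funs_def by blast
qed

sublocale fun_alg: complete_filtered_monoid lin_funs "conv cop" eps vanish_below
proof unfold_locales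
  show "conv cop (f + g) h = conv cop f h + conv cop g h" for f g h by (rule conv_add_left)
  show "conv cop f (g + h) = conv cop f g + conv cop f h" for f g h by (rule conv_add_right)
  show "conv cop (scale_fun c f) g = scale_fun c (conv cop f g)" for c f g by (rule conv_scale_left)
  show "conv cop f (scale_fun c g) = scale_fun c (conv cop f g)" for c f g by (rule conv_scale_right)
  show "vanish_below 0 = lin_funs" unfolding vanish_below_def lin_funs_def by simp
  show "vanish_below (Suc n) \<subseteq> vanish_below n" for n
    unfolding vanish_below_def using less_SucI by blast
  show "f \<in> vanish_below a \<Longrightarrow> g \<in> vanish_below b \<Longrightarrow> conv cop f g \<in> vanish_below (a + b)"
    for f g a b by (rule conv_vanish_below)
  show "(\<And>n. f \<in> vanish_below n) \<Longrightarrow> f = 0" for f by (rule vanish_below_all_eq_zero)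
  show "(\<And>k. F k \<in> lin_funs) \<Longrightarrow> (\<And>k. F (Suc k) - F k \<in> vanish_below k)
    \<Longrightarrow> \<exists>r\<in>lin_funs. \<forall>k. r - F k \<in> vanish_below k" for F
    by (rule vanish_below_complete)
qed (auto simp: lin_funs_def vanish_below_def scale_fun_def fun_pair.linear_compose_scale_right
      lin_add_fun lin_zero_fun eps_linear conv_lin conv_eps_left conv_eps_right coassoc)

lemma unipotent_iff: "fun_alg.unipotent f \<longleftrightarrow> lin f \<and> (\<forall>h\<in>H 0. f h = eps h)"
  using lin_diff_fun[OF _ eps_linear, of f]
  unfolding fun_alg.unipotent_def unfolding lin_funs_def vanish_below_def by auto

lemma bar_spec:
  assumes f: "lin f"
  shows "lin (bar smult H f) \<and> (\<forall>n. \<forall>h\<in>H n. bar smult H f h = (-1) ^ n * f h)"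
proof -
  define F where "F n = (\<lambda>x. (-1) ^ n * f x)" for n
  have F: "lin (F n)" for n unfolding F_def by (rule fun_pair.linear_compose_scale_right[OF f])
  have "\<exists>!g. lin g \<and> (\<forall>n. \<forall>h\<in>H n. g h = (-1) ^ n * f h)"
  proof (rule ex_ex1I)
    have "glue F h = (-1) ^ n * f h" if "h \<in> H n" for n h
      using glue_homogeneous[of F, OF F that] unfolding F_def .
    then show "\<exists>g. lin g \<and> (\<forall>n. \<forall>h\<in>H n. g h = (-1) ^ n * f h)"
      using lin_glue[of F, OF F] by blast
  next
    fix g g' assume g: "lin g \<and> (\<forall>n. \<forall>h\<in>H n. g h = (-1) ^ n * f h)"
      and g': "lin g' \<and> (\<forall>n. \<forall>h\<in>H n. g' h = (-1) ^ n * f h)"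
    show "g = g'"
    proof (rule lin_eq_homogeneous)
      show "lin g" "lin g'" using g g' by blast+
      fix n h assume "h \<in> H n" then show "g h = g' h" using g g' by simp
    qed
  qed
  from theI'[OF this] show ?thesis unfolding bar_def .
qed

lemma lin_bar: "lin f \<Longrightarrow> lin (bar smult H f)"
  using bar_spec by blast

lemma bar_homogeneous: "lin f \<Longrightarrow> h \<in> H n \<Longrightarrow> bar smult H f h = (-1) ^ n * f h"
  using bar_spec by blast

lemma bar_bar: "lin f \<Longrightarrow> bar smult H (bar smult H f) = f"
  by (rule lin_eq_homogeneous)
    (simp_all add: lin_bar bar_homogeneous mult.assoc[symmetric] power_mult_distrib[symmetric])

lemma bar_conv:
  assumes f: "lin f" and g: "lin g"
  shows "bar smult H (conv cop f g) = conv cop (bar smult H f) (bar smult H g)"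
proof (rule lin_eq_homogeneous)
  fix n h assume h: "h \<in> H n"
  have "bar smult H f (fst u) * bar smult H g (snd u) = (-1) ^ n * (f (fst u) * g (snd u))"
    if u: "u \<in> set (cop h)" for u
  proof -
    obtain i where i: "i \<le> n" "fst u \<in> H i" "snd u \<in> H (n - i)" using cop_graded[OF h u] by blast
    then have "bar smult H f (fst u) * bar smult H g (snd u)
        = (-1) ^ i * f (fst u) * ((-1) ^ (n - i) * g (snd u))"
      using bar_homogeneous[OF f] bar_homogeneous[OF g] by simp
    also have "\<dots> = (-1) ^ (i + (n - i)) * (f (fst u) * g (snd u))"
      by (simp only: power_add mult_ac)
    finally show ?thesis using i(1) by simp
  qed
  then have "conv cop (bar smult H f) (bar smult H g) h
      = sum_list (map (\<lambda>u. (-1) ^ n * (f (fst u) * g (snd u))) (cop h))"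
    unfolding conv_def pairsum_alt by (intro arg_cong[where f = sum_list] map_cong) simp_all
  also have "\<dots> = bar smult H (conv cop f g) h"
    unfolding bar_homogeneous[OF conv_lin[OF f g] h] conv_def pairsum_alt
    by (rule sum_list_const_mult)
  finally show "bar smult H (conv cop f g) h = conv cop (bar smult H f) (bar smult H g) h" ..
qed (simp_all add: lin_bar conv_lin f g)

sublocale bar_inv: filtered_involution lin_funs "conv cop" eps vanish_below "bar smult H"
proof (intro filtered_involution.intro filtered_involution_axioms.intro)
  show "complete_filtered_monoid lin_funs (conv cop) eps vanish_below" ..
  show "fun_alg.unipotent f \<Longrightarrow> fun_alg.unipotent (bar smult H f)" for f
    by (simp add: unipotent_iff lin_bar bar_homogeneous)
qed (simp_all add: lin_funs_def lin_bar bar_bar bar_conv)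

lemma conv_inv_eq:
  assumes "lin g" "conv cop g f = eps" "conv cop f g = eps" and f: "lin f"
  shows "conv_inv smult cop eps f = g"
  unfolding conv_inv_def
proof (rule the_equality)
  fix g' assume "lin g' \<and> conv cop g' f = eps \<and> conv cop f g' = eps"
  then show "g' = g"
    using fun_alg.left_right_inverse_eq[of f g' g] assms unfolding lin_funs_def by simp
qed (use assms in blast)

section \<open>Bilinear forms and characters\<close>

text \<open>Bilinear forms on \<open>H\<close> are the linear functionals on \<open>H \<otimes> H\<close>, and \<open>conv2\<close> is
  their convolution with respect to the coproduct of \<open>H \<otimes> H\<close>.\<close>
definition bilin_forms :: "('h \<times> 'h \<Rightarrow> 'k) set" where
  "bilin_forms = {B. (\<forall>y. lin (\<lambda>x. B (x, y))) \<and> (\<forall>x. lin (\<lambda>y. B (x, y)))}"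

definition conv2 :: "('h \<times> 'h \<Rightarrow> 'k) \<Rightarrow> ('h \<times> 'h \<Rightarrow> 'k) \<Rightarrow> 'h \<times> 'h \<Rightarrow> 'k" where
  "conv2 B C p = sum_list (map (\<lambda>u. sum_list (map (\<lambda>v. B (fst u, fst v) * C (snd u, snd v))
      (cop (snd p)))) (cop (fst p)))"

definition eps2 :: "'h \<times> 'h \<Rightarrow> 'k" where
  "eps2 p = eps (fst p) * eps (snd p)"

definition bilin_vanish_below :: "nat \<Rightarrow> ('h \<times> 'h \<Rightarrow> 'k) set" where
  "bilin_vanish_below n =
     {B \<in> bilin_forms. \<forall>i j x y. i + j < n \<longrightarrow> x \<in> H i \<longrightarrow> y \<in> H j \<longrightarrow> B (x, y) = 0}"

lemma bilin_formsD:
  "B \<in> bilin_forms \<Longrightarrow> lin (\<lambda>x. B (x, y))" "B \<in> bilin_forms \<Longrightarrow> lin (\<lambda>y. B (x, y))"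
  unfolding bilin_forms_def by blast+

lemma conv2_conv_right:
  "conv2 B C (x, y) = sum_list (map (\<lambda>u. conv cop (\<lambda>b. B (fst u, b)) (\<lambda>d. C (snd u, d)) y) (cop x))"
  unfolding conv2_def conv_def pairsum_alt by simp

lemma conv2_conv_left:
  "conv2 B C (x, y) = sum_list (map (\<lambda>v. conv cop (\<lambda>a. B (a, fst v)) (\<lambda>c. C (c, snd v)) x) (cop y))"
  unfolding conv2_def conv_def pairsum_alt fst_conv snd_conv by (rule sum_list_map_swap)

lemma conv2_bilin:
  assumes B: "B \<in> bilin_forms" and C: "C \<in> bilin_forms"
  shows "conv2 B C \<in> bilin_forms"
proof -
  have "lin (\<lambda>x. conv2 B C (x, y))" for y unfolding conv2_conv_left
    by (rule lin_sum_list_fun) (intro conv_lin bilin_formsD[OF B] bilin_formsD[OF C])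
  moreover have "lin (\<lambda>y. conv2 B C (x, y))" for x unfolding conv2_conv_right
    by (rule lin_sum_list_fun) (intro conv_lin bilin_formsD[OF B] bilin_formsD[OF C])
  ultimately show ?thesis unfolding bilin_forms_def by blast
qed

lemma eps2_bilin: "eps2 \<in> bilin_forms"
  unfolding bilin_forms_def eps2_def
  using lin_mult_const[OF eps_linear] fun_pair.linear_compose_scale_right[OF eps_linear] by simp

lemma conv2_eps2_left:
  assumes B: "B \<in> bilin_forms" shows "conv2 eps2 B = B"
proof
  fix p :: "'h \<times> 'h"
  obtain x y where p: "p = (x, y)" by (cases p)
  have inner: "sum_list (map (\<lambda>v. eps (fst v) * B (b, snd v)) (cop y)) = B (b, y)" for b
    using lin_sum_list[OF bilin_formsD(2)[OF B, of b], of "\<lambda>v. smult (eps (fst v)) (snd v)" "cop y"]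
    by (simp add: counit_left fun_pair.linear_scale[OF bilin_formsD(2)[OF B]])
  have "conv2 eps2 B (x, y) = sum_list (map (\<lambda>u. eps (fst u) *
       sum_list (map (\<lambda>v. eps (fst v) * B (snd u, snd v)) (cop y))) (cop x))"
    unfolding conv2_def eps2_def by (simp only: fst_conv snd_conv sum_list_const_mult mult.assoc)
  also have "\<dots> = sum_list (map (\<lambda>u. eps (fst u) * B (snd u, y)) (cop x))" by (simp only: inner)
  also have "\<dots> = B (x, y)"
    using lin_sum_list[OF bilin_formsD(1)[OF B, of y], of "\<lambda>u. smult (eps (fst u)) (snd u)" "cop x"]
    by (simp add: counit_left fun_pair.linear_scale[OF bilin_formsD(1)[OF B]])
  finally show "conv2 eps2 B p = B p" unfolding p .
qed

lemma conv2_eps2_right: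
  assumes B: "B \<in> bilin_forms" shows "conv2 B eps2 = B"
proof
  fix p :: "'h \<times> 'h"
  obtain x y where p: "p = (x, y)" by (cases p)
  have inner: "sum_list (map (\<lambda>v. eps (snd v) * B (a, fst v)) (cop y)) = B (a, y)" for a
    using lin_sum_list[OF bilin_formsD(2)[OF B, of a], of "\<lambda>v. smult (eps (snd v)) (fst v)" "cop y"]
    by (simp add: counit_right fun_pair.linear_scale[OF bilin_formsD(2)[OF B]])
  have "conv2 B eps2 (x, y) = sum_list (map (\<lambda>u. eps (snd u) *
       sum_list (map (\<lambda>v. eps (snd v) * B (fst u, fst v)) (cop y))) (cop x))"
    unfolding conv2_def eps2_def by (simp only: fst_conv snd_conv sum_list_const_mult mult_ac)
  also have "\<dots> = sum_list (map (\<lambda>u. eps (snd u) * B (fst u, y)) (cop x))" by (simp only: inner)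
  also have "\<dots> = B (x, y)"
    using lin_sum_list[OF bilin_formsD(1)[OF B, of y], of "\<lambda>u. smult (eps (snd u)) (fst u)" "cop x"]
    by (simp add: counit_right fun_pair.linear_scale[OF bilin_formsD(1)[OF B]])
  finally show "conv2 B eps2 p = B p" unfolding p .
qed

lemma conv2_vanish_below:
  assumes B: "B \<in> bilin_vanish_below a" and C: "C \<in> bilin_vanish_below b"
  shows "conv2 B C \<in> bilin_vanish_below (a + b)"
proof -
  have "B (fst u, fst v) * C (snd u, snd v) = 0"
    if ij: "i + j < a + b" and x: "x \<in> H i" and y: "y \<in> H j"
      and u: "u \<in> set (cop x)" and v: "v \<in> set (cop y)" for i j x y u v
  proof -
    obtain p where p: "p \<le> i" "fst u \<in> H p" "snd u \<in> H (i - p)" using cop_graded[OF x u] by blast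
    obtain q where q: "q \<le> j" "fst v \<in> H q" "snd v \<in> H (j - q)" using cop_graded[OF y v] by blast
    have "p + q < a \<or> (i - p) + (j - q) < b" using ij p(1) q(1) by linarith
    then have "B (fst u, fst v) = 0 \<or> C (snd u, snd v) = 0"
      using B C p q unfolding bilin_vanish_below_def by blast
    then show ?thesis by auto
  qed
  then show ?thesis using conv2_bilin B C unfolding bilin_vanish_below_def conv2_def
    by (auto intro!: sum_list_map_eq_zero)
qed

lemma bilin_vanish_below_all_eq_zero:
  assumes B: "\<And>n. B \<in> bilin_vanish_below n"
  shows "B = 0"
proof -
  have bilin: "B \<in> bilin_forms" using B[of 0] unfolding bilin_vanish_below_def by blast
  have homogeneous: "(\<lambda>y. B (x, y)) = 0" if x: "x \<in> H i" for x i
  proof (rule lin_eq_homogeneous)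
    show "lin (\<lambda>y. B (x, y))" by (rule bilin_formsD(2)[OF bilin])
    show "(\<lambda>y. B (x, y)) h = 0 h" if "h \<in> H j" for j h
      using B[of "Suc (i + j)"] x that unfolding bilin_vanish_below_def by auto
  qed (rule lin_zero_fun)
  have "(\<lambda>x. B (x, y)) = 0" for y
  proof (rule lin_eq_homogeneous)
    show "lin (\<lambda>x. B (x, y))" by (rule bilin_formsD(1)[OF bilin])
    show "(\<lambda>x. B (x, y)) h = 0 h" if "h \<in> H i" for i h
      using fun_cong[OF homogeneous[OF that], of y] by simp
  qed (rule lin_zero_fun)
  then show ?thesis by (auto simp: fun_eq_iff dest: fun_cong)
qed

sublocale bilin_alg: filtered_convolution bilin_forms conv2 eps2 bilin_vanish_below
proof unfold_locales
  show "conv2 (B + B') C = conv2 B C + conv2 B' C" for B B' C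
    unfolding fun_eq_iff conv2_def by (simp add: distrib_right sum_list_addf)
  show "conv2 B (C + C') = conv2 B C + conv2 B C'" for B C C'
    unfolding fun_eq_iff conv2_def by (simp add: distrib_left sum_list_addf)
  show "conv2 (scale_fun c B) C = scale_fun c (conv2 B C)" for c B C
    unfolding fun_eq_iff conv2_def scale_fun_def
    by (simp only: sum_list_const_mult mult.assoc simp_thms)
  show "conv2 B (scale_fun c C) = scale_fun c (conv2 B C)" for c B C
    unfolding fun_eq_iff conv2_def scale_fun_def
    by (simp only: sum_list_const_mult mult.left_commute simp_thms)
  show "bilin_vanish_below 0 = bilin_forms" unfolding bilin_vanish_below_def by simp
  show "bilin_vanish_below (Suc n) \<subseteq> bilin_vanish_below n" for n
    unfolding bilin_vanish_below_def using less_SucI by blast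
  show "conv2 B C \<in> bilin_vanish_below (a + b)"
    if "B \<in> bilin_vanish_below a" "C \<in> bilin_vanish_below b" for B C a b
    using that by (rule conv2_vanish_below)
  show "(\<And>n. B \<in> bilin_vanish_below n) \<Longrightarrow> B = 0" for B
    by (rule bilin_vanish_below_all_eq_zero)
  show "eps2 \<in> bilin_forms" by (rule eps2_bilin)
  show "B \<in> bilin_forms \<Longrightarrow> C \<in> bilin_forms \<Longrightarrow> conv2 B C \<in> bilin_forms" for B C
    by (rule conv2_bilin)
qed (auto simp: bilin_forms_def bilin_vanish_below_def scale_fun_def conv2_eps2_left
      conv2_eps2_right fun_pair.linear_compose_add fun_pair.linear_compose_scale_right
      fun_pair.linear_zero)

lemma mult_bilin:
  assumes f: "lin f" shows "(\<lambda>p. f (fst p * snd p)) \<in> bilin_forms"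
proof -
  have "lin (\<lambda>x. f (x * y))" for y
    by (rule linI) (simp_all add: distrib_right fun_pair.linear_add[OF f]
        smult_mult_left[symmetric] fun_pair.linear_scale[OF f])
  moreover have "lin (\<lambda>y. f (x * y))" for x
    by (rule linI) (simp_all add: distrib_left fun_pair.linear_add[OF f]
        smult_mult_right[symmetric] fun_pair.linear_scale[OF f])
  ultimately show ?thesis unfolding bilin_forms_def by simp
qed

lemma tensor_bilin: "lin f \<Longrightarrow> lin g \<Longrightarrow> (\<lambda>p. f (fst p) * g (snd p)) \<in> bilin_forms"
  unfolding bilin_forms_def using lin_mult_const fun_pair.linear_compose_scale_right by simp

lemma conv2_mult:
  assumes "lin f" "lin g"
  shows "conv2 (\<lambda>p. f (fst p * snd p)) (\<lambda>p. g (fst p * snd p))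
    = (\<lambda>p. conv cop f g (fst p * snd p))"
  using cop_mult[OF assms] unfolding fun_eq_iff conv2_def conv_def by simp

lemma conv2_tensor:
  "conv2 (\<lambda>p. f (fst p) * f' (snd p)) (\<lambda>p. g (fst p) * g' (snd p))
   = (\<lambda>p. conv cop f g (fst p) * conv cop f' g' (snd p))"
proof
  fix p :: "'h \<times> 'h"
  have "conv cop f g (fst p) * conv cop f' g' (snd p)
     = sum_list (map (\<lambda>u. f (fst u) * g (snd u) *
         sum_list (map (\<lambda>v. f' (fst v) * g' (snd v)) (cop (snd p)))) (cop (fst p)))"
    unfolding conv_def pairsum_alt by (rule sum_list_mult_const[symmetric])
  also have "\<dots> = sum_list (map (\<lambda>u. sum_list (map (\<lambda>v.
       f (fst u) * g (snd u) * (f' (fst v) * g' (snd v))) (cop (snd p)))) (cop (fst p)))"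
    by (simp only: sum_list_const_mult)
  also have "\<dots> = conv2 (\<lambda>p. f (fst p) * f' (snd p)) (\<lambda>p. g (fst p) * g' (snd p)) p"
    unfolding conv2_def by (simp only: fst_conv snd_conv mult_ac)
  finally show "conv2 (\<lambda>p. f (fst p) * f' (snd p)) (\<lambda>p. g (fst p) * g' (snd p)) p
     = conv cop f g (fst p) * conv cop f' g' (snd p)" ..
qed

lemma bilin_unipotentI:
  assumes "B \<in> bilin_forms" and "\<And>x y. x \<in> H 0 \<Longrightarrow> y \<in> H 0 \<Longrightarrow> B (x, y) = eps x * eps y"
  shows "bilin_alg.unipotent B"
  using assms bilin_alg.diff_closed[OF _ eps2_bilin, of B]
  unfolding bilin_alg.unipotent_def unfolding bilin_vanish_below_def eps2_def by simp

text \<open>Both \<open>\<rho> \<circ> m\<close> and \<open>\<rho> \<otimes> \<rho>\<close> solve \<open>X (\<psi> \<circ> m) X = \<phi> \<circ> m\<close> among bilinear forms,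
  since \<open>\<psi> \<circ> m = \<psi> \<otimes> \<psi>\<close> and \<open>\<phi> \<circ> m = \<phi> \<otimes> \<phi>\<close>.\<close>
lemma sandwich_character:
  assumes two: "(2::'k) \<noteq> 0" and \<phi>: "character smult \<phi>" and \<psi>: "character smult \<psi>"
    and \<psi>0: "\<forall>h\<in>H 0. \<psi> h = eps h" and \<rho>: "lin \<rho>" and \<rho>0: "\<forall>h\<in>H 0. \<rho> h = eps h"
    and eq: "conv cop (conv cop \<rho> \<psi>) \<rho> = \<phi>"
  shows "character smult \<rho>"
proof -
  define M where "M f = (\<lambda>p. f (fst p * snd p))" for f :: "'h \<Rightarrow> 'k"
  define T where "T f = (\<lambda>p. f (fst p) * f (snd p))" for f :: "'h \<Rightarrow> 'k"
  have \<psi>_lin: "lin \<psi>" and M_T: "M \<psi> = T \<psi>" "M \<phi> = T \<phi>"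
    using \<phi> \<psi> unfolding character_def M_def T_def by auto
  have H0_mult: "x \<in> H 0 \<Longrightarrow> y \<in> H 0 \<Longrightarrow> x * y \<in> H 0" for x y
    using mult_H[of x 0 y 0] by simp
  have M\<rho>: "bilin_alg.unipotent (M \<rho>)"
    unfolding M_def using mult_bilin[OF \<rho>] \<rho>0 H0_mult eps_mult
    by (intro bilin_unipotentI) simp_all
  have T\<rho>: "bilin_alg.unipotent (T \<rho>)"
    unfolding T_def using tensor_bilin[OF \<rho> \<rho>] \<rho>0 by (intro bilin_unipotentI) simp_all
  have T\<psi>: "bilin_alg.unipotent (T \<psi>)"
    unfolding T_def using tensor_bilin[OF \<psi>_lin \<psi>_lin] \<psi>0 by (intro bilin_unipotentI) simp_all
  have "conv2 (conv2 (M \<rho>) (T \<psi>)) (M \<rho>) = M \<phi>"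
    unfolding M_T(1)[symmetric] unfolding M_def
    by (simp only: conv2_mult \<rho> \<psi>_lin conv_lin eq)
  moreover have "conv2 (conv2 (T \<rho>) (T \<psi>)) (T \<rho>) = T \<phi>"
    unfolding T_def conv2_tensor eq ..
  ultimately have "M \<rho> = T \<rho>"
    using M_T(2) bilin_alg.sandwich_unique[OF two M\<rho> T\<rho> T\<psi>] by simp
  then have "\<rho> (x * y) = \<rho> x * \<rho> y" for x y
    unfolding M_def T_def by (drule_tac fun_cong[of _ _ "(x, y)"]) simp
  moreover have "\<rho> 1 = 1" using \<rho>0 one_in_H0 eps_one by simp
  ultimately show ?thesis unfolding character_def using \<rho> by blast
qed

lemma ex1_sandwich:
  assumes two: "(2::'k) \<noteq> 0"
    and \<phi>: "lin \<phi>" "\<forall>h\<in>H 0. \<phi> h = eps h" and \<psi>: "lin \<psi>" "\<forall>h\<in>H 0. \<psi> h = eps h"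
  shows "\<exists>!\<rho>. lin \<rho> \<and> \<phi> = conv cop (conv cop \<rho> \<psi>) \<rho> \<and> (\<forall>h\<in>H 0. \<rho> h = eps h)"
proof -
  have \<phi>': "fun_alg.unipotent \<phi>" and \<psi>': "fun_alg.unipotent \<psi>"
    using \<phi> \<psi> unipotent_iff by blast+
  obtain \<rho> where \<rho>: "fun_alg.unipotent \<rho>" and eq: "conv cop (conv cop \<rho> \<psi>) \<rho> = \<phi>"
    using fun_alg.sandwich_exists[OF two \<phi>' \<psi>'] by blast
  show ?thesis
  proof (rule ex1I[of _ \<rho>])
    show "lin \<rho> \<and> \<phi> = conv cop (conv cop \<rho> \<psi>) \<rho> \<and> (\<forall>h\<in>H 0. \<rho> h = eps h)"
      using \<rho> eq unipotent_iff by auto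
  next
    fix \<rho>' assume "lin \<rho>' \<and> \<phi> = conv cop (conv cop \<rho>' \<psi>) \<rho>' \<and> (\<forall>h\<in>H 0. \<rho>' h = eps h)"
    then show "\<rho>' = \<rho>"
      using fun_alg.sandwich_unique[OF two _ \<rho> \<psi>'] eq unipotent_iff by auto
  qed
qed

lemma unipotent_conv_inv:
  assumes two: "(2::'k) \<noteq> 0" and f: "fun_alg.unipotent f"
  obtains g where "fun_alg.unipotent g" "conv cop g f = eps" "conv cop f g = eps"
    "conv_inv smult cop eps f = g"
proof -
  obtain g where g: "fun_alg.unipotent g" "conv cop g f = eps" "conv cop f g = eps"
    using fun_alg.inverse_exists[OF two f] by blast
  then have "conv_inv smult cop eps f = g" using f conv_inv_eq unipotent_iff by blast
  with g that show ?thesis by blast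
qed

lemma sandwich_even_fun:
  assumes two: "(2::'k) \<noteq> 0" and \<psi>: "lin \<psi>" "\<forall>h\<in>H 0. \<psi> h = eps h"
    and \<rho>: "lin \<rho>" "\<forall>h\<in>H 0. \<rho> h = eps h" and eq: "conv cop (conv cop \<rho> \<psi>) \<rho> = \<phi>"
    and bar: "bar smult H \<phi> = conv_inv smult cop eps \<psi>"
  shows "even_fun smult H \<rho>"
proof -
  have \<psi>': "fun_alg.unipotent \<psi>" and \<rho>': "fun_alg.unipotent \<rho>"
    using \<psi> \<rho> unipotent_iff by blast+
  obtain q where "fun_alg.unipotent q" "conv cop q \<psi> = eps" "conv cop \<psi> q = eps"
    "conv_inv smult cop eps \<psi> = q"
    using unipotent_conv_inv[OF two \<psi>'] .
  then show ?thesis unfolding even_fun_def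
    using bar_inv.sandwich_even[OF two \<rho>' \<psi>' eq, of q] bar
    unfolding fun_alg.unipotent_def by simp
qed

lemma sandwich_odd_fun:
  assumes two: "(2::'k) \<noteq> 0" and \<phi>: "lin \<phi>" "\<forall>h\<in>H 0. \<phi> h = eps h"
    and \<psi>: "lin \<psi>" "\<forall>h\<in>H 0. \<psi> h = eps h"
    and \<rho>: "lin \<rho>" "\<forall>h\<in>H 0. \<rho> h = eps h" and eq: "conv cop (conv cop \<rho> \<psi>) \<rho> = \<phi>"
    and bar: "bar smult H \<phi> = \<psi>"
  shows "odd_fun smult H cop eps \<rho>"
proof -
  have \<phi>': "fun_alg.unipotent \<phi>" and \<psi>': "fun_alg.unipotent \<psi>" and \<rho>': "fun_alg.unipotent \<rho>"
    using \<phi> \<psi> \<rho> unipotent_iff by blast+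
  obtain \<tau> where "fun_alg.unipotent \<tau>" "conv cop \<tau> \<rho> = eps" "conv cop \<rho> \<tau> = eps"
    "conv_inv smult cop eps \<rho> = \<tau>"
    using unipotent_conv_inv[OF two \<rho>'] .
  then show ?thesis unfolding odd_fun_def
    using bar_inv.sandwich_odd[OF two \<rho>' \<psi>' \<phi>' eq bar] by simp
qed

end

theorem proposition1p4:
  fixes smult :: "'k::field \<Rightarrow> 'h::ring_1 \<Rightarrow> 'h"
    and H :: "nat \<Rightarrow> 'h set" and cop :: "'h \<Rightarrow> ('h \<times> 'h) list"
    and eps :: "'h \<Rightarrow> 'k" and S :: "'h \<Rightarrow> 'h"
    and \<phi> \<psi> :: "'h \<Rightarrow> 'k"
  assumes hopf: "graded_connected_hopf_algebra smult H cop eps S"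
    and char: "(2::'k) \<noteq> 0"
    and lin: "lin_fun smult \<phi>" "lin_fun smult \<psi>"
    and deg0: "\<forall>h\<in>H 0. \<phi> h = eps h" "\<forall>h\<in>H 0. \<psi> h = eps h"
  shows "(\<exists>!\<rho>. lin_fun smult \<rho> \<and> \<phi> = conv cop (conv cop \<rho> \<psi>) \<rho> \<and> (\<forall>h\<in>H 0. \<rho> h = eps h))
    \<and> (\<forall>\<rho>. lin_fun smult \<rho> \<and> \<phi> = conv cop (conv cop \<rho> \<psi>) \<rho> \<and> (\<forall>h\<in>H 0. \<rho> h = eps h) \<longrightarrow>
          (character smult \<phi> \<and> character smult \<psi> \<longrightarrow> character smult \<rho>)
        \<and> (bar smult H \<phi> = conv_inv smult cop eps \<psi> \<longrightarrow> even_fun smult H \<rho>)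
        \<and> (bar smult H \<phi> = \<psi> \<longrightarrow> odd_fun smult H cop eps \<rho>))"
proof -
  interpret graded_bialgebra smult H cop eps
    using hopf by (rule graded_connected_hopf_algebra_imp_graded_bialgebra)
  have "(character smult \<phi> \<and> character smult \<psi> \<longrightarrow> character smult \<rho>)
      \<and> (bar smult H \<phi> = conv_inv smult cop eps \<psi> \<longrightarrow> even_fun smult H \<rho>)
      \<and> (bar smult H \<phi> = \<psi> \<longrightarrow> odd_fun smult H cop eps \<rho>)"
    if \<rho>: "lin_fun smult \<rho>" "\<phi> = conv cop (conv cop \<rho> \<psi>) \<rho>" "\<forall>h\<in>H 0. \<rho> h = eps h" for \<rho>
    using sandwich_character[OF char _ _ deg0(2) \<rho>(1,3) \<rho>(2)[symmetric]]
      sandwich_even_fun[OF char lin(2) deg0(2) \<rho>(1,3) \<rho>(2)[symmetric]]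
      sandwich_odd_fun[OF char lin(1) deg0(1) lin(2) deg0(2) \<rho>(1,3) \<rho>(2)[symmetric]]
    by blast
  then show ?thesis using ex1_sandwich[OF char lin(1) deg0(1) lin(2) deg0(2)] by blast
qed

end
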